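(* Let $r\ge1$ and $n_1,m_1,\ldots,n_r,m_r\ge1$ be integers with $n_1+\cdots+n_r=m_1+\cdots+m_r$, let $\mathbf{S}=(1^{n_1},\ast^{m_1},\ldots,1^{n_r},\ast^{m_r})$, and let $i=\min\{n_1,m_1,\ldots,n_r,m_r\}$. Then \[ |NC_2(\mathbf{S})|\ge(1+i)^{r-1}. \]
   Context: $1^{k}$ denotes $k$ consecutive entries equal to $1$ (similarly $\ast^k$), so $\mathbf{S}$ is a string of length $N=2(n_1+\cdots+n_r)$ in the symbols $1,\ast$ with $r$ runs. $NC_2(\mathbf{S})$ is the set of non-crossing pairings of $\{1,\ldots,N\}$ in which every pair joins a position carrying $1$ with a position carrying $\ast$ in $\mathbf{S}$. *)

theory Defs
  imports Main
begin

text \<open>The string S is a list of booleans: True stands for the symbol 1,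
  False for the symbol *. Positions are 0,...,length S - 1.\<close>

definition word_S :: "nat list \<Rightarrow> nat list \<Rightarrow> bool list" where
  "word_S ns ms = concat (map (\<lambda>k. replicate (ns ! k) True @ replicate (ms ! k) False)
                              [0..<length ns])"

definition is_pairing :: "nat \<Rightarrow> (nat \<times> nat) set \<Rightarrow> bool" where
  "is_pairing N P \<longleftrightarrow>
     (\<forall>(a, b) \<in> P. a < b \<and> b < N) \<and>
     (\<forall>x < N. \<exists>!p \<in> P. fst p = x \<or> snd p = x)"

definition non_crossing :: "(nat \<times> nat) set \<Rightarrow> bool" where
  "non_crossing P \<longleftrightarrow>
     (\<forall>(a, b) \<in> P. \<forall>(c, d) \<in> P. \<not> (a < c \<and> c < b \<and> b < d))"

definition NC2 :: "bool list \<Rightarrow> (nat \<times> nat) set set" where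
  "NC2 S = {P. is_pairing (length S) P \<and> non_crossing P \<and>
               (\<forall>(a, b) \<in> P. S ! a \<noteq> S ! b)}"

end

theory Submission
  imports Defs
begin

text \<open>
  In a word \<open>x 1\<^sup>a \<ast>\<^sup>b 1\<^sup>c y\<close> with \<open>b + i \<le> a + c\<close> and \<open>i \<le> a, b, c\<close>, choose \<open>j\<close>, pair the
  last \<open>j\<close> letters of \<open>1\<^sup>a\<close> with the first \<open>j\<close> letters of \<open>\<ast>\<^sup>b\<close> by nested arcs, and the remaining
  \<open>b - j\<close> letters of \<open>\<ast>\<^sup>b\<close> with the first \<open>b - j\<close> letters of \<open>1\<^sup>c\<close>; what is left is the word
  \<open>x 1\<^bsup>a + c - b\<^esup> y\<close>, and any non-crossing pairing of it completes these arcs to one of the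
  original word. At least \<open>i + 1\<close> values of \<open>j\<close> are admissible and different \<open>j\<close> give different
  pairings, so merging three consecutive blocks into one costs at most a factor \<open>i + 1\<close>. For a
  balanced word one of the two merges starting at the first or second block is always possible,
  and after \<open>r - 1\<close> merges one is left with \<open>1\<^sup>n \<ast>\<^sup>n\<close>, which has a non-crossing pairing.
\<close>

definition pairing_on :: "nat set \<Rightarrow> (nat \<times> nat) set \<Rightarrow> bool" where
  "pairing_on A P \<longleftrightarrow>
     (\<forall>(a, b) \<in> P. a < b \<and> a \<in> A \<and> b \<in> A) \<and>
     (\<forall>x \<in> A. \<exists>!p \<in> P. fst p = x \<or> snd p = x)"

lemma is_pairing_iff_pairing_on: "is_pairing N P \<longleftrightarrow> pairing_on {..<N} P"
proof -
  have "(\<forall>(a, b) \<in> P. a < b \<and> b < N) \<longleftrightarrow> (\<forall>(a, b) \<in> P. a < b \<and> a \<in> {..<N} \<and> b \<in> {..<N})"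
    by auto
  moreover have "(\<forall>x < N. Q x) \<longleftrightarrow> (\<forall>x \<in> {..<N}. Q x)" for Q :: "nat \<Rightarrow> bool"
    by auto
  ultimately show ?thesis unfolding is_pairing_def pairing_on_def by (simp only:)
qed

lemma pairing_onI:
  "(\<And>a b. (a, b) \<in> P \<Longrightarrow> a < b \<and> a \<in> A \<and> b \<in> A) \<Longrightarrow>
   (\<And>x. x \<in> A \<Longrightarrow> \<exists>!p \<in> P. fst p = x \<or> snd p = x) \<Longrightarrow> pairing_on A P"
  unfolding pairing_on_def by blast

lemma pairing_on_pairD: "pairing_on A P \<Longrightarrow> (a, b) \<in> P \<Longrightarrow> a < b \<and> a \<in> A \<and> b \<in> A"
  unfolding pairing_on_def by blast

lemma pairing_on_touchD: "pairing_on A P \<Longrightarrow> x \<in> A \<Longrightarrow> \<exists>!p \<in> P. fst p = x \<or> snd p = x"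
  unfolding pairing_on_def by blast

lemma pairing_on_Un:
  assumes P: "pairing_on A P" and Q: "pairing_on B Q" and "A \<inter> B = {}"
  shows "pairing_on (A \<union> B) (P \<union> Q)"
proof (rule pairing_onI)
  show "a < b \<and> a \<in> A \<union> B \<and> b \<in> A \<union> B" if "(a, b) \<in> P \<union> Q" for a b
    using that pairing_on_pairD[OF P] pairing_on_pairD[OF Q] by blast
  have avoid: "\<not> (fst q = x \<or> snd q = x)" if "pairing_on C R" "q \<in> R" "x \<notin> C" for C R q x
    using pairing_on_pairD[OF that(1), of "fst q" "snd q"] that(2,3) by auto
  fix x assume "x \<in> A \<union> B"
  then consider "x \<in> A" "x \<notin> B" | "x \<in> B" "x \<notin> A" using \<open>A \<inter> B = {}\<close> by blast
  then show "\<exists>!p \<in> P \<union> Q. fst p = x \<or> snd p = x"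
  proof cases
    case 1
    with pairing_on_touchD[OF P] obtain p where "p \<in> P" "fst p = x \<or> snd p = x"
      "\<forall>p' \<in> P. fst p' = x \<or> snd p' = x \<longrightarrow> p' = p" by metis
    with 1 show ?thesis using avoid[OF Q] by blast
  next
    case 2
    with pairing_on_touchD[OF Q] obtain p where "p \<in> Q" "fst p = x \<or> snd p = x"
      "\<forall>p' \<in> Q. fst p' = x \<or> snd p' = x \<longrightarrow> p' = p" by metis
    with 2 show ?thesis using avoid[OF P] by blast
  qed
qed

lemma pairing_on_image:
  assumes f: "strict_mono f" and P: "pairing_on A P"
  shows "pairing_on (f ` A) (map_prod f f ` P)"
proof (rule pairing_onI)
  show "a < b \<and> a \<in> f ` A \<and> b \<in> f ` A" if "(a, b) \<in> map_prod f f ` P" for a b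
    using that pairing_on_pairD[OF P] strict_monoD[OF f] by fastforce
  have touch: "fst (map_prod f f p) = f x \<or> snd (map_prod f f p) = f x \<longleftrightarrow> fst p = x \<or> snd p = x" for p x
    using strict_mono_eq[OF f] by (cases p) auto
  fix y assume "y \<in> f ` A"
  then obtain x where "x \<in> A" "y = f x" by blast
  obtain p where p: "p \<in> P" "fst p = x \<or> snd p = x"
    and uniq: "\<forall>p' \<in> P. fst p' = x \<or> snd p' = x \<longrightarrow> p' = p"
    using pairing_on_touchD[OF P \<open>x \<in> A\<close>] by metis
  show "\<exists>!q \<in> map_prod f f ` P. fst q = y \<or> snd q = y"
  proof (rule ex1I[of _ "map_prod f f p"])
    show "map_prod f f p \<in> map_prod f f ` P \<and> (fst (map_prod f f p) = y \<or> snd (map_prod f f p) = y)"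
      using p touch \<open>y = f x\<close> by simp
    fix q assume q: "q \<in> map_prod f f ` P \<and> (fst q = y \<or> snd q = y)"
    then have "q \<in> map_prod f f ` P" ..
    then obtain p' where q_eq: "q = map_prod f f p'" and "p' \<in> P" ..
    moreover have "fst p' = x \<or> snd p' = x" using q q_eq touch \<open>y = f x\<close> by simp
    ultimately show "q = map_prod f f p" using uniq by auto
  qed
qed

lemma non_crossing_image:
  "strict_mono f \<Longrightarrow> non_crossing P \<Longrightarrow> non_crossing (map_prod f f ` P)"
  unfolding non_crossing_def by (fastforce simp: strict_mono_less)

lemma non_crossing_Un:
  assumes "non_crossing P" "non_crossing Q"
    and Q: "\<forall>(a, b) \<in> Q. L \<le> a \<and> b < R"
    and P: "\<forall>(a, b) \<in> P. a \<notin> {L..<R} \<and> b \<notin> {L..<R}"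
  shows "non_crossing (P \<union> Q)"
  unfolding non_crossing_def
proof (intro ballI, clarify)
  fix a b c d assume ab: "(a, b) \<in> P \<union> Q" and cd: "(c, d) \<in> P \<union> Q" and "a < c" "c < b" "b < d"
  then consider "(a, b) \<in> P" "(c, d) \<in> P" | "(a, b) \<in> Q" "(c, d) \<in> Q"
    | "(a, b) \<in> P" "(c, d) \<in> Q" | "(a, b) \<in> Q" "(c, d) \<in> P" by blast
  then show False
  proof cases
    case 1 then show ?thesis using assms(1) \<open>a < c\<close> \<open>c < b\<close> \<open>b < d\<close> unfolding non_crossing_def by fast
  next
    case 2 then show ?thesis using assms(2) \<open>a < c\<close> \<open>c < b\<close> \<open>b < d\<close> unfolding non_crossing_def by fast
  next
    case 3
    then have "L \<le> c" "d < R" "b \<notin> {L..<R}" using P Q by auto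
    then show ?thesis using \<open>c < b\<close> \<open>b < d\<close> by simp
  next
    case 4
    then have "L \<le> a" "b < R" "c \<notin> {L..<R}" using P Q by auto
    then show ?thesis using \<open>a < c\<close> \<open>c < b\<close> by simp
  qed
qed

lemma NC2_pairing_on: "P \<in> NC2 w \<longleftrightarrow>
    pairing_on {..<length w} P \<and> non_crossing P \<and> (\<forall>(a, b) \<in> P. w ! a \<noteq> w ! b)"
  unfolding NC2_def is_pairing_iff_pairing_on by simp

lemma finite_NC2: "finite (NC2 w)"
proof (rule finite_subset)
  show "NC2 w \<subseteq> Pow ({..<length w} \<times> {..<length w})"
    using pairing_on_pairD by (fastforce simp: NC2_pairing_on)
qed simp

lemma pairing_on_not_left_and_right:
  assumes "pairing_on A P" "(x, e) \<in> P" "(d, x) \<in> P"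
  shows False
proof -
  have "d < x" "x < e" "x \<in> A" using pairing_on_pairD[OF assms(1)] assms(2,3) by blast+
  moreover have "(x, e) = (d, x)"
    using pairing_on_touchD[OF assms(1) \<open>x \<in> A\<close>] assms(2,3) by (metis fst_conv snd_conv)
  ultimately show False by simp
qed

definition shift_from :: "nat \<Rightarrow> nat \<Rightarrow> nat \<Rightarrow> nat" where
  "shift_from L m p = (if p < L then p else p + m)"

definition insert_pairing :: "nat \<Rightarrow> nat \<Rightarrow> (nat \<times> nat) set \<Rightarrow> (nat \<times> nat) set \<Rightarrow> (nat \<times> nat) set" where
  "insert_pairing L m P Z =
     map_prod (shift_from L m) (shift_from L m) ` P \<union> map_prod ((+) L) ((+) L) ` Z"

lemma strict_mono_shift_from: "strict_mono (shift_from L m)"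
  by (rule strict_monoI) (auto simp: shift_from_def)

lemma shift_from_notin: "shift_from L m p \<notin> {L..<L + m}"
  by (simp add: shift_from_def)

lemma lessThan_split_shift_from:
  "{..<L + m + n} = shift_from L m ` {..<L + n} \<union> (+) L ` {..<m}"
proof
  show "{..<L + m + n} \<subseteq> shift_from L m ` {..<L + n} \<union> (+) L ` {..<m}"
  proof
    fix x assume "x \<in> {..<L + m + n}"
    then consider "x < L" | "L \<le> x" "x < L + m" | "L + m \<le> x" "x < L + m + n" by fastforce
    then show "x \<in> shift_from L m ` {..<L + n} \<union> (+) L ` {..<m}"
    proof cases
      case 1 then have "x = shift_from L m x" by (simp add: shift_from_def)
      with 1 show ?thesis by auto
    next
      case 2 then have "x = L + (x - L)" by simp
      with 2 show ?thesis by (metis UnI2 add_less_cancel_left imageI lessThan_iff)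
    next
      case 3 then have "x = shift_from L m (x - m)" by (simp add: shift_from_def)
      with 3 show ?thesis by auto
    qed
  qed
qed (auto simp: shift_from_def)

lemma nth_shift_from:
  "a < length u + length v \<Longrightarrow> (u @ z @ v) ! shift_from (length u) (length z) a = (u @ v) ! a"
  by (auto simp: shift_from_def nth_append)

lemma nth_append_middle: "c < length z \<Longrightarrow> (u @ z @ v) ! (length u + c) = z ! c"
  by (simp add: nth_append)

lemma insert_pairing_in_NC2:
  assumes P: "P \<in> NC2 (u @ v)" and Z: "Z \<in> NC2 z"
  shows "insert_pairing (length u) (length z) P Z \<in> NC2 (u @ z @ v)"
proof -
  define L m s where "L = length u" and "m = length z" and "s = shift_from L m"
  let ?P' = "map_prod s s ` P" and ?Z' = "map_prod ((+) L) ((+) L) ` Z"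
  have Pp: "pairing_on {..<L + length v} P" and Pnc: "non_crossing P"
    and Plab: "\<forall>(a, b) \<in> P. (u @ v) ! a \<noteq> (u @ v) ! b"
    using P unfolding NC2_pairing_on L_def by auto
  have Zp: "pairing_on {..<m} Z" and Znc: "non_crossing Z"
    and Zlab: "\<forall>(a, b) \<in> Z. z ! a \<noteq> z ! b"
    using Z unfolding NC2_pairing_on m_def by auto
  have mono: "strict_mono s" "strict_mono ((+) L)"
    unfolding s_def by (simp_all add: strict_mono_shift_from strict_monoI)
  have "s x \<noteq> L + y" if "y < m" for x y
    using shift_from_notin[of L m x] that unfolding s_def by auto
  then have "s ` {..<L + length v} \<inter> (+) L ` {..<m} = {}" by auto
  then have "pairing_on (s ` {..<L + length v} \<union> (+) L ` {..<m}) (?P' \<union> ?Z')"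
    by (intro pairing_on_Un pairing_on_image mono Pp Zp)
  then have pairing: "pairing_on {..<length (u @ z @ v)} (?P' \<union> ?Z')"
    using lessThan_split_shift_from[of L m "length v"] unfolding s_def L_def m_def
    by (simp add: add.assoc)
  have "\<forall>(a, b) \<in> ?Z'. L \<le> a \<and> b < L + m"
    using pairing_on_pairD[OF Zp] by auto
  moreover have "\<forall>(a, b) \<in> ?P'. a \<notin> {L..<L + m} \<and> b \<notin> {L..<L + m}"
    using shift_from_notin unfolding s_def by auto
  ultimately have crossing: "non_crossing (?P' \<union> ?Z')"
    by (intro non_crossing_Un non_crossing_image mono Pnc Znc)
  have "(u @ z @ v) ! s a \<noteq> (u @ z @ v) ! s b" if "(a, b) \<in> P" for a b
    using Plab that pairing_on_pairD[OF Pp that] nth_shift_from[of _ u v z]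
    unfolding s_def L_def m_def by fastforce
  moreover have "(u @ z @ v) ! (L + a) \<noteq> (u @ z @ v) ! (L + b)" if "(a, b) \<in> Z" for a b
    using Zlab that pairing_on_pairD[OF Zp that] nth_append_middle[of _ z u v]
    unfolding L_def m_def by fastforce
  ultimately have "\<forall>(a, b) \<in> ?P' \<union> ?Z'. (u @ z @ v) ! a \<noteq> (u @ z @ v) ! b"
    by auto
  with pairing crossing show ?thesis
    unfolding NC2_pairing_on insert_pairing_def s_def L_def m_def by simp
qed

lemma insert_pairing_inj:
  assumes "\<forall>(a, b) \<in> Z. a < m"
  shows "inj (\<lambda>P. insert_pairing L m P Z)"
proof (rule injI)
  fix P1 P2 assume eq: "insert_pairing L m P1 Z = insert_pairing L m P2 Z"
  let ?s = "map_prod (shift_from L m) (shift_from L m)"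
  have outside: "?s ` P = {q \<in> insert_pairing L m P Z. fst q \<notin> {L..<L + m}}" for P
    using assms shift_from_notin[of L m] unfolding insert_pairing_def by fastforce
  have "?s ` P1 = ?s ` P2"
    using outside[of P1] outside[of P2] eq by simp
  moreover have "inj ?s" using strict_mono_shift_from strict_mono_imp_inj_on prod.inj_map by blast
  ultimately show "P1 = P2" by (simp add: inj_image_eq_iff)
qed

definition rainbow :: "nat \<Rightarrow> (nat \<times> nat) set" where
  "rainbow k = (\<lambda>s. (s, 2 * k - 1 - s)) ` {..<k}"

lemma rainbow_in_NC2: "rainbow k \<in> NC2 (replicate k X @ replicate k (\<not> X))"
proof -
  have "pairing_on {..<2 * k} (rainbow k)"
  proof (rule pairing_onI)
    show "a < b \<and> a \<in> {..<2 * k} \<and> b \<in> {..<2 * k}" if "(a, b) \<in> rainbow k" for a b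
      using that unfolding rainbow_def by auto
    fix x assume "x \<in> {..<2 * k}"
    define s where "s = (if x < k then x else 2 * k - 1 - x)"
    show "\<exists>!p \<in> rainbow k. fst p = x \<or> snd p = x"
    proof (rule ex1I[of _ "(s, 2 * k - 1 - s)"])
      show "(s, 2 * k - 1 - s) \<in> rainbow k \<and> (fst (s, 2 * k - 1 - s) = x \<or> snd (s, 2 * k - 1 - s) = x)"
        using \<open>x \<in> {..<2 * k}\<close> unfolding rainbow_def s_def by auto
      show "p = (s, 2 * k - 1 - s)" if "p \<in> rainbow k \<and> (fst p = x \<or> snd p = x)" for p
        using that \<open>x \<in> {..<2 * k}\<close> unfolding rainbow_def s_def by auto
    qed
  qed
  moreover have "non_crossing (rainbow k)"
    unfolding non_crossing_def rainbow_def by auto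
  moreover have "\<forall>(a, b) \<in> rainbow k. (replicate k X @ replicate k (\<not> X)) ! a \<noteq> (replicate k X @ replicate k (\<not> X)) ! b"
    unfolding rainbow_def by (auto simp: nth_append)
  ultimately show ?thesis by (simp add: NC2_pairing_on mult_2)
qed

definition two_rainbows :: "nat \<Rightarrow> nat \<Rightarrow> (nat \<times> nat) set" where
  "two_rainbows j b = insert_pairing (2 * j) (2 * (b - j)) (rainbow j) (rainbow (b - j))"

lemma two_rainbows_in_NC2:
  assumes "j \<le> b"
  shows "two_rainbows j b \<in>
    NC2 (replicate j X @ replicate j (\<not> X) @ replicate (b - j) (\<not> X) @ replicate (b - j) X)"
proof -
  let ?u = "replicate j X @ replicate j (\<not> X)" and ?z = "replicate (b - j) (\<not> X) @ replicate (b - j) (\<not> \<not> X)"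
  have "insert_pairing (length ?u) (length ?z) (rainbow j) (rainbow (b - j)) \<in> NC2 (?u @ ?z @ [])"
    using rainbow_in_NC2[of j X] rainbow_in_NC2[of "b - j" "\<not> X"] by (intro insert_pairing_in_NC2) auto
  then show ?thesis unfolding two_rainbows_def by (simp add: mult_2)
qed

lemma outer_pair_in_two_rainbows: "j < b \<Longrightarrow> (2 * j, 2 * b - 1) \<in> two_rainbows j b"
  unfolding two_rainbows_def insert_pairing_def rainbow_def
  by (rule UnI2, rule image_eqI[of _ _ "(0, 2 * (b - j) - 1)"]) auto

lemma inner_pair_in_two_rainbows: "j < j' \<Longrightarrow> (j' - 1 - j, j + j') \<in> two_rainbows j' b"
  unfolding two_rainbows_def insert_pairing_def rainbow_def
  by (rule UnI1, rule image_eqI[of _ _ "(j' - 1 - j, j + j')"]) (auto simp: shift_from_def)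

lemma insert_two_rainbows_in_NC2:
  assumes "j \<le> a" "j \<le> b" "b - j \<le> c" and P: "P \<in> NC2 (x @ replicate (a + c - b) X @ y)"
  shows "insert_pairing (length x + (a - j)) (2 * b) P (two_rainbows j b)
           \<in> NC2 (x @ replicate a X @ replicate b (\<not> X) @ replicate c X @ y)"
proof -
  let ?u = "x @ replicate (a - j) X" and ?v = "replicate (c - (b - j)) X @ y"
    and ?z = "replicate j X @ replicate j (\<not> X) @ replicate (b - j) (\<not> X) @ replicate (b - j) X"
  have u_v: "?u @ ?v = x @ replicate (a + c - b) X @ y"
    using assms(1-3) by (simp flip: replicate_add)
  have u_z_v: "?u @ ?z @ ?v = x @ replicate a X @ replicate b (\<not> X) @ replicate c X @ y"
    using assms(1-3) by (simp flip: replicate_add)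
  have "insert_pairing (length ?u) (length ?z) P (two_rainbows j b) \<in> NC2 (?u @ ?z @ ?v)"
    using P two_rainbows_in_NC2[OF assms(2)] unfolding u_v[symmetric] by (rule insert_pairing_in_NC2)
  moreover have "length ?u = length x + (a - j)" "length ?z = 2 * b"
    using assms(2) by simp_all
  ultimately show ?thesis unfolding u_z_v by (simp add: mult_2)
qed

lemma insert_two_rainbows_distinct:
  assumes "j < j'" "j' \<le> a" "j' \<le> b"
    and "pairing_on A (insert_pairing (L + (a - j)) (2 * b) P (two_rainbows j b))"
  shows "insert_pairing (L + (a - j)) (2 * b) P (two_rainbows j b)
    \<noteq> insert_pairing (L + (a - j')) (2 * b) P' (two_rainbows j' b)"
proof
  assume eq: "insert_pairing (L + (a - j)) (2 * b) P (two_rainbows j b)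
    = insert_pairing (L + (a - j')) (2 * b) P' (two_rainbows j' b)"
  \<comment> \<open>position \<open>L + a + j\<close> would be a left end for \<open>j\<close> and a right end for \<open>j'\<close>\<close>
  have "(L + a + j, L + (a - j) + (2 * b - 1)) \<in> insert_pairing (L + (a - j)) (2 * b) P (two_rainbows j b)"
    using outer_pair_in_two_rainbows[of j b] assms(1-3) unfolding insert_pairing_def
    by (intro UnI2 image_eqI[of _ _ "(2 * j, 2 * b - 1)"]) auto
  moreover have "(L + (a - j') + (j' - 1 - j), L + a + j) \<in> insert_pairing (L + (a - j')) (2 * b) P' (two_rainbows j' b)"
    using inner_pair_in_two_rainbows[OF assms(1), of b] assms(2) unfolding insert_pairing_def
    by (intro UnI2 image_eqI[of _ _ "(j' - 1 - j, j + j')"]) auto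
  ultimately show False
    using eq assms(4) pairing_on_not_left_and_right by metis
qed

lemma card_NC2_merge_blocks:
  fixes X :: bool
  assumes "b + i \<le> a + c" "i \<le> a" "i \<le> b" "i \<le> c"
  shows "(i + 1) * card (NC2 (x @ replicate (a + c - b) X @ y))
           \<le> card (NC2 (x @ replicate a X @ replicate b (\<not> X) @ replicate c X @ y))"
proof -
  define w' w where "w' = x @ replicate (a + c - b) X @ y"
    and "w = x @ replicate a X @ replicate b (\<not> X) @ replicate c X @ y"
  \<comment> \<open>the admissible \<open>j\<close> are those with \<open>b - c \<le> j \<le> min a b\<close>\<close>
  define J where "J = {b - min b c..b - min b c + i}"
  define F where "F j P = insert_pairing (length x + (a - j)) (2 * b) P (two_rainbows j b)" for j P
  have J: "j \<le> a \<and> j \<le> b \<and> b - j \<le> c" if "j \<in> J" for j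
    using that assms unfolding J_def by auto
  have F_in: "F j P \<in> NC2 w" if "j \<in> J" "P \<in> NC2 w'" for j P
    using J[OF that(1)] that(2) insert_two_rainbows_in_NC2
    unfolding F_def w_def w'_def by simp
  have F_distinct: "F j P \<noteq> F j' P'"
    if "j \<in> J" "j' \<in> J" "j < j'" "P \<in> NC2 w'" for j j' P P'
  proof -
    have "j' \<le> a" "j' \<le> b" using J[OF that(2)] by simp_all
    moreover have "pairing_on {..<length w} (F j P)"
      using F_in[OF that(1,4)] by (simp add: NC2_pairing_on)
    ultimately show ?thesis
      unfolding F_def by (rule insert_two_rainbows_distinct[OF \<open>j < j'\<close>])
  qed
  have "inj_on (case_prod F) (J \<times> NC2 w')"
  proof (rule inj_onI, clarify)
    fix j P j' P' assume in_dom: "j \<in> J" "P \<in> NC2 w'" "j' \<in> J" "P' \<in> NC2 w'"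
      and eq: "F j P = F j' P'"
    then have "j = j'"
      using F_distinct[of j j' P P'] F_distinct[of j' j P' P] by (metis linorder_neqE_nat)
    moreover have "\<forall>(p, q) \<in> two_rainbows j b. p < 2 * b"
      using two_rainbows_in_NC2[of j b True] J[OF in_dom(1)] pairing_on_pairD
      by (fastforce simp: NC2_pairing_on)
    then have "P = P'"
      by (rule injD[OF insert_pairing_inj]) (use eq \<open>j = j'\<close> in \<open>simp add: F_def\<close>)
    ultimately show "j = j' \<and> P = P'" ..
  qed
  then have "card (J \<times> NC2 w') \<le> card (NC2 w)"
    using F_in by (intro card_inj_on_le finite_NC2) auto
  then show ?thesis unfolding J_def w_def w'_def by (simp add: card_cartesian_product)
qed

fun block_word :: "(nat \<times> nat) list \<Rightarrow> bool list" where
  "block_word [] = []"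
| "block_word ((n, m) # bs) = replicate n True @ replicate m False @ block_word bs"

lemma word_S_eq_block_word: "length ns = length ms \<Longrightarrow> word_S ns ms = block_word (zip ns ms)"
proof (induction ns arbitrary: ms)
  case Nil
  then show ?case by (simp add: word_S_def)
next
  case (Cons n ns)
  then obtain m ms' where ms: "ms = m # ms'" "length ns = length ms'" by (cases ms) auto
  have "[0..<length (n # ns)] = 0 # map Suc [0..<length ns]"
    by (simp add: map_Suc_upt upt_conv_Cons del: upt_Suc)
  then have "word_S (n # ns) (m # ms') = replicate n True @ replicate m False @ word_S ns ms'"
    unfolding word_S_def by (simp add: comp_def)
  then show ?case using Cons.IH[OF ms(2)] ms by simp
qed

definition blocks_at_least :: "nat \<Rightarrow> (nat \<times> nat) list \<Rightarrow> bool" where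
  "blocks_at_least i bs \<longleftrightarrow> (\<forall>(n, m) \<in> set bs. i \<le> n \<and> i \<le> m)"

definition balanced_blocks :: "(nat \<times> nat) list \<Rightarrow> bool" where
  "balanced_blocks bs \<longleftrightarrow> sum_list (map fst bs) = sum_list (map snd bs)"

lemma card_NC2_block_word_merge:
  assumes "blocks_at_least i ((n1, m1) # (n2, m2) # bs)" "balanced_blocks ((n1, m1) # (n2, m2) # bs)"
  obtains b where "blocks_at_least i (b # bs)" "balanced_blocks (b # bs)"
    "(i + 1) * card (NC2 (block_word (b # bs))) \<le> card (NC2 (block_word ((n1, m1) # (n2, m2) # bs)))"
proof -
  have i: "i \<le> n1" "i \<le> m1" "i \<le> n2" "i \<le> m2" "blocks_at_least i bs"
    using assms(1) unfolding blocks_at_least_def by auto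
  have bal: "n1 + n2 + sum_list (map fst bs) = m1 + m2 + sum_list (map snd bs)"
    using assms(2) unfolding balanced_blocks_def by simp
  show thesis
  proof (cases "m1 + i \<le> n1 + n2")
    case True
    have "(i + 1) * card (NC2 ([] @ replicate (n1 + n2 - m1) True @ replicate m2 False @ block_word bs))
      \<le> card (NC2 ([] @ replicate n1 True @ replicate m1 (\<not> True) @ replicate n2 True @ replicate m2 False @ block_word bs))"
      by (rule card_NC2_merge_blocks) (use True i in auto)
    with True i bal show thesis
      by (intro that[of "(n1 + n2 - m1, m2)"]) (auto simp: blocks_at_least_def balanced_blocks_def)
  next
    case False
    \<comment> \<open>if neither merge were possible, adding the two inequalities would give \<open>n1 + m2 < 2 * i\<close>\<close>
    then have le: "n2 + i \<le> m1 + m2" using i bal by linarith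
    have "(i + 1) * card (NC2 (replicate n1 True @ replicate (m1 + m2 - n2) False @ block_word bs))
      \<le> card (NC2 (replicate n1 True @ replicate m1 False @ replicate n2 (\<not> False) @ replicate m2 False @ block_word bs))"
      by (rule card_NC2_merge_blocks) (use le i in auto)
    with le i bal show thesis
      by (intro that[of "(n1, m1 + m2 - n2)"]) (auto simp: blocks_at_least_def balanced_blocks_def)
  qed
qed

lemma card_NC2_block_word_ge:
  "length bs = Suc k \<Longrightarrow> blocks_at_least i bs \<Longrightarrow> balanced_blocks bs \<Longrightarrow>
   (1 + i) ^ k \<le> card (NC2 (block_word bs))"
proof (induction k arbitrary: bs)
  case 0
  then obtain n m where bs: "bs = [(n, m)]" and "n = m"
    by (cases bs) (auto simp: balanced_blocks_def)
  then have "rainbow n \<in> NC2 (block_word bs)" using rainbow_in_NC2[of n True] by simp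
  then have "card (NC2 (block_word bs)) \<noteq> 0" using finite_NC2 by (metis card_0_eq empty_iff)
  then show ?case by simp
next
  case (Suc k)
  then obtain n1 m1 n2 m2 bs' where bs: "bs = (n1, m1) # (n2, m2) # bs'" "length bs' = k"
    by (cases bs; cases "tl bs") (auto simp: length_Suc_conv)
  with Suc.prems obtain b where "blocks_at_least i (b # bs')" "balanced_blocks (b # bs')"
    and merge: "(i + 1) * card (NC2 (block_word (b # bs'))) \<le> card (NC2 (block_word bs))"
    using card_NC2_block_word_merge by metis
  then have IH: "(1 + i) ^ k \<le> card (NC2 (block_word (b # bs')))"
    using Suc.IH bs(2) by simp
  have "(1 + i) ^ Suc k = (i + 1) * (1 + i) ^ k" by simp
  also have "\<dots> \<le> (i + 1) * card (NC2 (block_word (b # bs')))" using IH by (rule mult_le_mono2)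
  also have "\<dots> \<le> card (NC2 (block_word bs))" by (rule merge)
  finally show ?case .
qed

theorem proposition3p2:
  fixes ns ms :: "nat list" and r :: nat
  assumes "r \<ge> 1"
    and "length ns = r" and "length ms = r"
    and "\<forall>k < r. ns ! k \<ge> 1 \<and> ms ! k \<ge> 1"
    and "sum_list ns = sum_list ms"
  shows "card (NC2 (word_S ns ms)) \<ge> (1 + Min (set ns \<union> set ms)) ^ (r - 1)"
proof -
  define i where "i = Min (set ns \<union> set ms)"
  obtain k where r: "r = Suc k" using assms(1) by (cases r) auto
  have "blocks_at_least i (zip ns ms)"
    unfolding blocks_at_least_def i_def by (auto dest: set_zip_leftD set_zip_rightD)
  moreover have "balanced_blocks (zip ns ms)"
    using assms(2,3,5) by (simp add: balanced_blocks_def)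
  ultimately have "(1 + i) ^ k \<le> card (NC2 (block_word (zip ns ms)))"
    using assms(2,3) r by (intro card_NC2_block_word_ge) auto
  then show ?thesis using word_S_eq_block_word assms(2,3) r unfolding i_def by simp
qed

end
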